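(* Let $w(x,y)=x^{a_1}y^{b_1}\cdots x^{a_k}y^{b_k}\in F_2$ with all integers $a_i\neq0$, $b_i\neq 0$, and put $A=\sum_{i=1}^k a_i$, $B=\sum_{i=1}^k b_i$, $A_i=\sum_{j\le i}a_j$, $B_i=\sum_{j<i}b_j$. If $A\neq 0$ and the word map $w:\mathrm{SL}(2,\mathbb{C})^2\to \mathrm{SL}(2,\mathbb{C})$ is not surjective, then $\sum_{i=1}^k b_i\gamma^{2A_i}=0$ for every root $\gamma$ of $z^A+1=0$. If $B\neq 0$ and the word map $w$ is not surjective, then $\sum_{i=1}^k a_i\delta^{2B_i}=0$ for every root $\delta$ of $z^B+1=0$.
   Context: The word map sends $(X,Y)\in\mathrm{SL}(2,\mathbb{C})^2$ to $X^{a_1}Y^{b_1}\cdots X^{a_k}Y^{b_k}$. *)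

theory Defs
  imports "HOL-Analysis.Analysis"
begin

definition SL2 :: "(complex^2^2) set" where
  "SL2 = {M. det M = 1}"

fun mpow_nat :: "complex^2^2 \<Rightarrow> nat \<Rightarrow> complex^2^2" where
  "mpow_nat M 0 = mat 1"
| "mpow_nat M (Suc n) = M ** mpow_nat M n"

definition mpow_int :: "complex^2^2 \<Rightarrow> int \<Rightarrow> complex^2^2" where
  "mpow_int M n = (if 0 \<le> n then mpow_nat M (nat n) else mpow_nat (matrix_inv M) (nat (- n)))"

definition word_map :: "(nat \<Rightarrow> int) \<Rightarrow> (nat \<Rightarrow> int) \<Rightarrow> nat \<Rightarrow> complex^2^2 \<Rightarrow> complex^2^2 \<Rightarrow> complex^2^2" where
  "word_map a b k X Y = foldr (\<lambda>i M. mpow_int X (a i) ** mpow_int Y (b i) ** M) [1..<k+1] (mat 1)"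

definition word_map_surjective :: "(nat \<Rightarrow> int) \<Rightarrow> (nat \<Rightarrow> int) \<Rightarrow> nat \<Rightarrow> bool" where
  "word_map_surjective a b k \<longleftrightarrow> (\<forall>Z\<in>SL2. \<exists>X\<in>SL2. \<exists>Y\<in>SL2. word_map a b k X Y = Z)"

end

theory Submission
  imports Defs
begin

text \<open>Put \<open>D t = diag(t, 1/t)\<close> and \<open>U s = [[1, s], [0, 1]]\<close>. Then \<open>w(D t, U s)\<close> is upper
triangular with diagonal \<open>(t^A, t^-A)\<close> and upper right entry \<open>s t^-A \<Sum> b\<^sub>i t^(2A\<^sub>i)\<close>;
symmetrically for \<open>w(U s, D t)\<close>. Since the image of a word map is invariant under conjugation and
every element of SL(2,C) is conjugate to \<open>diag(l, 1/l)\<close> (if \<open>l \<noteq> \<plusminus>1\<close>) or to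
\<open>\<plusminus>U c\<close>, the map is surjective as soon as its image contains all \<open>D l\<close>, \<open>U c\<close> and \<open>-U c\<close>.
When \<open>A \<noteq> 0\<close> the first two are obtained from \<open>w(D t, 1)\<close> and \<open>w(U s, 1) = U (A s)\<close>, and if
\<open>\<gamma>^A = -1\<close> with \<open>\<Sum> b\<^sub>i \<gamma>^(2A\<^sub>i) \<noteq> 0\<close>, then \<open>w(D \<gamma>, U s)\<close> runs through all \<open>-U c\<close>.\<close>

definition mat2 :: "complex \<Rightarrow> complex \<Rightarrow> complex \<Rightarrow> complex \<Rightarrow> complex^2^2" where
  "mat2 a b c d = (\<chi> i j. if i = 1 then (if j = 1 then a else b) else (if j = 1 then c else d))"

lemma mat2_nth [simp]:
  "mat2 a b c d $ 1 $ 1 = a" "mat2 a b c d $ 1 $ 2 = b"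
  "mat2 a b c d $ 2 $ 1 = c" "mat2 a b c d $ 2 $ 2 = d"
  by (simp_all add: mat2_def)

lemma mat2_eta: "mat2 (Z$1$1) (Z$1$2) (Z$2$1) (Z$2$2) = Z"
  unfolding vec_eq_iff mat2_def by (auto simp: forall_2)

lemma mat2_eq_iff: "mat2 a b c d = mat2 a' b' c' d' \<longleftrightarrow> a = a' \<and> b = b' \<and> c = c' \<and> d = d'"
  by (metis mat2_nth)

lemma mat2_mult:
  "mat2 a b c d ** mat2 a' b' c' d' = mat2 (a*a' + b*c') (a*b' + b*d') (c*a' + d*c') (c*b' + d*d')"
  by (subst mat2_eta[symmetric, of "mat2 a b c d ** _"]) (simp add: matrix_matrix_mult_def sum_2)

lemma mat_1_eq_mat2: "mat 1 = mat2 1 0 0 1"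
  by (subst mat2_eta[symmetric, of "mat 1"]) (simp add: mat_def)

lemma det_mat2: "det (mat2 a b c d) = a*d - b*c"
  by (simp add: det_2)

lemma matrix_inv_unique:
  fixes M N :: "complex^2^2"
  assumes "M ** N = mat 1" "N ** M = mat 1"
  shows "matrix_inv M = N"
proof -
  let ?C = "matrix_inv M"
  have "M ** ?C = mat 1 \<and> ?C ** M = mat 1"
    unfolding matrix_inv_def by (rule someI[of _ N]) (use assms in simp)
  then have "?C = ?C ** (M ** N)" and "?C ** M = mat 1" by (simp_all add: assms)
  then show ?thesis by (metis matrix_mul_assoc matrix_mul_lid)
qed

lemma mpow_nat_diag: "mpow_nat (mat2 t 0 0 u) n = mat2 (t^n) 0 0 (u^n)"
  by (induction n) (simp_all add: mat_1_eq_mat2 mat2_mult)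

lemma mpow_nat_unipotent: "mpow_nat (mat2 1 s 0 1) n = mat2 1 (of_nat n * s) 0 1"
  by (induction n) (simp_all add: mat_1_eq_mat2 mat2_mult algebra_simps)

lemma matrix_inv_diag: "t \<noteq> 0 \<Longrightarrow> matrix_inv (mat2 t 0 0 (inverse t)) = mat2 (inverse t) 0 0 t"
  by (rule matrix_inv_unique) (simp_all add: mat_1_eq_mat2 mat2_mult)

lemma matrix_inv_unipotent: "matrix_inv (mat2 1 s 0 1) = mat2 1 (-s) 0 1"
  by (rule matrix_inv_unique) (simp_all add: mat_1_eq_mat2 mat2_mult)

lemma mpow_int_diag:
  "t \<noteq> 0 \<Longrightarrow> mpow_int (mat2 t 0 0 (inverse t)) n = mat2 (t powi n) 0 0 (inverse (t powi n))"
  by (auto simp: mpow_int_def matrix_inv_diag mpow_nat_diag power_int_def power_inverse)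

lemma mpow_int_unipotent: "mpow_int (mat2 1 s 0 1) n = mat2 1 (of_int n * s) 0 1"
  by (auto simp: mpow_int_def matrix_inv_unipotent mpow_nat_unipotent)

lemma power_int_sum: "(x::'a::field) \<noteq> 0 \<Longrightarrow> x powi (\<Sum>i\<in>I. f i) = (\<Prod>i\<in>I. x powi f i)"
  by (induction I rule: infinite_finite_induct) (simp_all add: power_int_add)

lemma power_int_double: "(x::'a::field) powi (2 * n) = (x powi n)^2"
  by (simp add: power_int_mult mult.commute[of 2])

lemma ex_power_int_root: "(n::int) \<noteq> 0 \<Longrightarrow> (l::complex) \<noteq> 0 \<Longrightarrow> \<exists>t. t \<noteq> 0 \<and> t powi n = l"
  by (intro exI[of _ "exp (Ln l / of_int n)"]) (simp add: exp_power_int)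

lemma word_map_Suc:
  "word_map a b (Suc k) X Y = word_map a b k X Y ** (mpow_int X (a (Suc k)) ** mpow_int Y (b (Suc k)))"
proof -
  have "foldr (\<lambda>i M. F i ** M) xs N = foldr (\<lambda>i M. F i ** M) xs (mat 1) ** N"
    for F :: "nat \<Rightarrow> complex^2^2" and xs N
    by (induction xs) (simp_all add: matrix_mul_assoc)
  from this[of _ _ "_ ** mat 1"] have
    "foldr (\<lambda>i M. F i ** M) (xs @ [j]) (mat 1) = foldr (\<lambda>i M. F i ** M) xs (mat 1) ** F j"
    for F :: "nat \<Rightarrow> complex^2^2" and xs j
    by simp
  moreover have "[1..<Suc k + 1] = [1..<k + 1] @ [Suc k]" by simp
  ultimately show ?thesis
    unfolding word_map_def by presburger
qed

lemma word_map_upper_triangular: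
  assumes "\<And>i. i \<in> {1..k} \<Longrightarrow> mpow_int X (a i) ** mpow_int Y (b i) = mat2 (x i) (y i) 0 (inverse (x i))"
    and "\<And>i. i \<in> {1..k} \<Longrightarrow> x i \<noteq> 0"
  shows "word_map a b k X Y =
    mat2 (\<Prod>i=1..k. x i) (inverse (\<Prod>i=1..k. x i) * (\<Sum>i=1..k. (\<Prod>j=1..<i. x j)^2 * x i * y i))
         0 (inverse (\<Prod>i=1..k. x i))"
  using assms
proof (induction k)
  case 0
  then show ?case by (simp add: word_map_def mat_1_eq_mat2)
next
  case (Suc k)
  have "(\<Prod>j=1..<Suc k. x j) = (\<Prod>j=1..k. x j)"
    by (rule prod.cong) auto
  moreover have "(\<Prod>j=1..k. x j) \<noteq> 0" "x (Suc k) \<noteq> 0"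
    using Suc.prems(2) by auto
  ultimately show ?case
    using Suc by (simp add: word_map_Suc mat2_mult mat2_eq_iff field_simps power2_eq_square)
qed

lemma word_map_diag_unipotent:
  fixes t s :: complex
  assumes "t \<noteq> 0"
  shows "word_map a b k (mat2 t 0 0 (inverse t)) (mat2 1 s 0 1) =
    mat2 (t powi (\<Sum>i=1..k. a i))
      (inverse (t powi (\<Sum>i=1..k. a i)) * s * (\<Sum>i=1..k. of_int (b i) * t powi (2 * (\<Sum>j=1..i. a j))))
      0 (inverse (t powi (\<Sum>i=1..k. a i)))"
proof -
  have factor: "mpow_int (mat2 t 0 0 (inverse t)) (a i) ** mpow_int (mat2 1 s 0 1) (b i)
      = mat2 (t powi a i) (t powi a i * of_int (b i) * s) 0 (inverse (t powi a i))" for i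
    using assms by (simp add: mpow_int_diag mpow_int_unipotent mat2_mult mult.assoc)
  have summand: "(\<Prod>j=1..<i. t powi a j)^2 * t powi a i * (t powi a i * of_int (b i) * s)
      = s * (of_int (b i) * t powi (2 * (\<Sum>j=1..i. a j)))" if "i \<in> {1..k}" for i
  proof -
    have "{1..i} = insert i {1..<i}" using that by auto
    then have "t powi (\<Sum>j=1..i. a j) = t powi a i * (\<Prod>j=1..<i. t powi a j)"
      using assms by (simp add: power_int_add power_int_sum)
    then show ?thesis
      by (simp add: power_int_double power2_eq_square mult_ac)
  qed
  then have "(\<Sum>i=1..k. (\<Prod>j=1..<i. t powi a j)^2 * t powi a i * (t powi a i * of_int (b i) * s))
      = s * (\<Sum>i=1..k. of_int (b i) * t powi (2 * (\<Sum>j=1..i. a j)))"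
    unfolding sum_distrib_left by (intro sum.cong refl summand)
  then show ?thesis
    using assms by (simp add: word_map_upper_triangular[OF factor] power_int_sum mult.assoc)
qed

lemma word_map_unipotent_diag:
  fixes t s :: complex
  assumes "t \<noteq> 0"
  shows "word_map a b k (mat2 1 s 0 1) (mat2 t 0 0 (inverse t)) =
    mat2 (t powi (\<Sum>i=1..k. b i))
      (inverse (t powi (\<Sum>i=1..k. b i)) * s * (\<Sum>i=1..k. of_int (a i) * t powi (2 * (\<Sum>j=1..<i. b j))))
      0 (inverse (t powi (\<Sum>i=1..k. b i)))"
proof -
  have factor: "mpow_int (mat2 1 s 0 1) (a i) ** mpow_int (mat2 t 0 0 (inverse t)) (b i)
      = mat2 (t powi b i) (of_int (a i) * s * inverse (t powi b i)) 0 (inverse (t powi b i))" for i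
    using assms by (simp add: mpow_int_diag mpow_int_unipotent mat2_mult)
  have summand: "(\<Prod>j=1..<i. t powi b j)^2 * t powi b i * (of_int (a i) * s * inverse (t powi b i))
      = s * (of_int (a i) * t powi (2 * (\<Sum>j=1..<i. b j)))" for i
  proof -
    have "t powi (2 * (\<Sum>j=1..<i. b j)) = (\<Prod>j=1..<i. t powi b j)^2"
      by (subst power_int_double, subst power_int_sum[OF assms], rule refl)
    then show ?thesis
      using assms by simp
  qed
  then have "(\<Sum>i=1..k. (\<Prod>j=1..<i. t powi b j)^2 * t powi b i * (of_int (a i) * s * inverse (t powi b i)))
      = s * (\<Sum>i=1..k. of_int (a i) * t powi (2 * (\<Sum>j=1..<i. b j)))"
    unfolding sum_distrib_left by (intro sum.cong refl summand)
  then show ?thesis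
    using assms by (simp add: word_map_upper_triangular[OF factor] power_int_sum mult.assoc)
qed

lemma mpow_nat_conj:
  assumes "Q ** P = mat 1" "P ** Q = mat 1"
  shows "mpow_nat (P ** X ** Q) n = P ** mpow_nat X n ** Q"
proof (induction n)
  case 0
  show ?case by (simp add: assms(2))
next
  case (Suc n)
  have "P ** X ** Q ** (P ** mpow_nat X n ** Q) = P ** X ** (Q ** P) ** mpow_nat X n ** Q"
    by (simp add: matrix_mul_assoc)
  then show ?case using Suc assms by (simp add: matrix_mul_assoc)
qed

lemma mpow_int_conj:
  fixes X X' P Q :: "complex^2^2"
  assumes "Q ** P = mat 1" "P ** Q = mat 1" "X ** X' = mat 1" "X' ** X = mat 1"
  shows "mpow_int (P ** X ** Q) n = P ** mpow_int X n ** Q"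
proof -
  have "P ** X ** Q ** (P ** X' ** Q) = P ** (X ** ((Q ** P) ** X')) ** Q"
    and "P ** X' ** Q ** (P ** X ** Q) = P ** (X' ** ((Q ** P) ** X)) ** Q"
    by (simp_all add: matrix_mul_assoc)
  then have "matrix_inv (P ** X ** Q) = P ** X' ** Q"
    using assms by (intro matrix_inv_unique) simp_all
  moreover have "matrix_inv X = X'"
    using assms by (intro matrix_inv_unique)
  ultimately show ?thesis
    using assms(1,2) by (simp add: mpow_int_def mpow_nat_conj)
qed

lemma word_map_conj:
  fixes X X' Y Y' P Q :: "complex^2^2"
  assumes "Q ** P = mat 1" "P ** Q = mat 1" "X ** X' = mat 1" "X' ** X = mat 1"
    "Y ** Y' = mat 1" "Y' ** Y = mat 1"
  shows "word_map a b k (P ** X ** Q) (P ** Y ** Q) = P ** word_map a b k X Y ** Q"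
proof (induction k)
  case 0
  show ?case by (simp add: word_map_def assms(2))
next
  case (Suc k)
  have "P ** word_map a b k X Y ** Q ** (P ** mpow_int X (a (Suc k)) ** Q ** (P ** mpow_int Y (b (Suc k)) ** Q))
     = P ** word_map a b k X Y ** (Q ** P) ** mpow_int X (a (Suc k)) ** (Q ** P) ** mpow_int Y (b (Suc k)) ** Q"
    by (simp add: matrix_mul_assoc)
  then show ?case
    using Suc assms by (simp add: word_map_Suc mpow_int_conj[OF assms(1,2)] matrix_mul_assoc)
qed

definition word_image :: "(nat \<Rightarrow> int) \<Rightarrow> (nat \<Rightarrow> int) \<Rightarrow> nat \<Rightarrow> (complex^2^2) set" where
  "word_image a b k = {word_map a b k X Y | X Y. X \<in> SL2 \<and> Y \<in> SL2}"

lemma word_image_memI: "word_map a b k X Y = Z \<Longrightarrow> X \<in> SL2 \<Longrightarrow> Y \<in> SL2 \<Longrightarrow> Z \<in> word_image a b k"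
  unfolding word_image_def by blast

lemma diag_in_SL2: "t \<noteq> 0 \<Longrightarrow> mat2 t 0 0 (inverse t) \<in> SL2"
  by (simp add: SL2_def det_mat2)

lemma unipotent_in_SL2: "mat2 1 s 0 1 \<in> SL2"
  by (simp add: SL2_def det_mat2)

lemma word_map_surjective_iff_SL2_subset: "word_map_surjective a b k \<longleftrightarrow> SL2 \<subseteq> word_image a b k"
  unfolding word_map_surjective_def word_image_def subset_iff mem_Collect_eq by metis

lemma word_image_conj:
  assumes "T \<in> word_image a b k" "P ** Q = mat 1" "Q ** P = mat 1"
  shows "P ** T ** Q \<in> word_image a b k"
proof -
  obtain X Y where XY: "X \<in> SL2" "Y \<in> SL2" "T = word_map a b k X Y"
    using assms(1) by (auto simp: word_image_def)
  have inverse_exists: "\<exists>M'. M ** M' = mat 1 \<and> M' ** M = mat 1" if "M \<in> SL2" for M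
    using that invertible_det_nz[of M] by (auto simp: SL2_def invertible_def)
  obtain X' Y' where "X ** X' = mat 1" "X' ** X = mat 1" "Y ** Y' = mat 1" "Y' ** Y = mat 1"
    using inverse_exists XY(1,2) by blast
  then have "word_map a b k (P ** X ** Q) (P ** Y ** Q) = P ** T ** Q"
    using word_map_conj assms(2,3) XY(3) by blast
  moreover have "det (P ** M ** Q) = det M" for M :: "complex^2^2"
    using det_mul[of P Q] assms(2) by (simp add: det_mul)
  then have "P ** X ** Q \<in> SL2" "P ** Y ** Q \<in> SL2"
    using XY(1,2) by (simp_all add: SL2_def)
  ultimately show ?thesis
    unfolding word_image_def by (metis (mono_tags, lifting) mem_Collect_eq)
qed

lemma SL2_triangularizable:
  assumes "Z \<in> SL2"
  obtains P Q l c where "P ** Q = mat 1" "Q ** P = mat 1" "l \<noteq> 0" "Z = P ** mat2 l c 0 (inverse l) ** Q"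
proof -
  define a b c d where "a = Z$1$1" "b = Z$1$2" "c = Z$2$1" "d = Z$2$2"
  have Z: "Z = mat2 a b c d" unfolding a_b_c_d_def by (rule mat2_eta[symmetric])
  have det: "a*d - b*c = 1" using assms Z by (simp add: SL2_def det_mat2)
  show ?thesis
  proof (cases "c = 0")
    case True
    then have "a \<noteq> 0" "d = inverse a" using det by (auto simp: inverse_unique)
    then show ?thesis using that[of "mat 1" "mat 1" a b] Z True by simp
  next
    case False
    define l where "l = ((a+d) + csqrt ((a+d)^2 - 4)) / 2"
    have char_poly: "l^2 - (a+d)*l + 1 = 0"
    proof -
      have "2*l - (a+d) = csqrt ((a+d)^2 - 4)" unfolding l_def by (simp add: field_simps)
      then have "(2*l - (a+d))^2 = (a+d)^2 - 4" by simp
      then have "4 * (l^2 - (a+d)*l + 1) = 0" by (simp add: power2_eq_square algebra_simps)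
      then show ?thesis by (simp only: mult_eq_0_iff) simp
    qed
    then have l0: "l \<noteq> 0" by auto
    have trace: "a + d = l + inverse l" using char_poly l0 by (simp add: field_simps power2_eq_square)
    \<comment> \<open>the first column \<open>(l - d, c)\<close> of \<open>P\<close> is an eigenvector of \<open>Z\<close> for \<open>l\<close>\<close>
    define P where "P = mat2 (l-d) 1 c 0"
    define Q where "Q = mat2 0 (1/c) 1 ((d-l)/c)"
    have PQ: "P ** Q = mat 1" "Q ** P = mat 1"
      using False by (simp_all add: P_def Q_def mat2_mult mat_1_eq_mat2 mat2_eq_iff field_simps)
    have "Z ** P = P ** mat2 l 1 0 (inverse l)"
      unfolding Z P_def mat2_mult mat2_eq_iff using char_poly det trace l0
      by (auto simp: field_simps power2_eq_square)
    then have "Z = P ** mat2 l 1 0 (inverse l) ** Q"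
      by (metis PQ(1) matrix_mul_assoc matrix_mul_rid)
    then show ?thesis using that PQ l0 by blast
  qed
qed

lemma word_map_surjective_if_triangular_in_image:
  assumes diag: "\<And>l. l \<noteq> 0 \<Longrightarrow> mat2 l 0 0 (inverse l) \<in> word_image a b k"
    and unipotent: "\<And>c. mat2 1 c 0 1 \<in> word_image a b k"
    and neg_unipotent: "\<And>c. mat2 (-1) c 0 (-1) \<in> word_image a b k"
  shows "word_map_surjective a b k"
  unfolding word_map_surjective_iff_SL2_subset
proof
  fix Z assume "Z \<in> SL2"
  then obtain P Q l c where PQ: "P ** Q = mat 1" "Q ** P = mat 1" and l0: "l \<noteq> 0"
    and Z: "Z = P ** mat2 l c 0 (inverse l) ** Q"
    by (rule SL2_triangularizable)
  have "mat2 l c 0 (inverse l) \<in> word_image a b k"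
  proof (cases "l = 1 \<or> l = -1")
    case True
    then show ?thesis using unipotent neg_unipotent by auto
  next
    case False
    then have ne: "inverse l - l \<noteq> 0"
      using l0 by (auto simp: field_simps square_eq_1_iff)
    define u where "u = c / (inverse l - l)"
    have "u * (inverse l - l) = c"
      using ne by (simp add: u_def)
    then have "mat2 1 u 0 1 ** mat2 l 0 0 (inverse l) ** mat2 1 (-u) 0 1 = mat2 l c 0 (inverse l)"
      by (simp add: mat2_mult mat2_eq_iff algebra_simps)
    moreover have "mat2 1 u 0 1 ** mat2 1 (-u) 0 1 = mat 1" "mat2 1 (-u) 0 1 ** mat2 1 u 0 1 = mat 1"
      by (simp_all add: mat2_mult mat_1_eq_mat2)
    ultimately show ?thesis
      using word_image_conj[OF diag[OF l0]] by metis
  qed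
  then show "Z \<in> word_image a b k"
    using word_image_conj PQ Z by blast
qed

lemma word_map_surjective_if_sum_a_nonzero:
  fixes \<gamma> :: complex
  assumes A: "(\<Sum>i=1..k. a i) \<noteq> 0"
    and \<gamma>: "\<gamma> powi (\<Sum>i=1..k. a i) = -1"
    and S: "(\<Sum>i=1..k. of_int (b i) * \<gamma> powi (2 * (\<Sum>j=1..i. a j))) \<noteq> 0"
  shows "word_map_surjective a b k"
proof (rule word_map_surjective_if_triangular_in_image)
  fix l :: complex assume "l \<noteq> 0"
  then obtain t where t: "t \<noteq> 0" "t powi (\<Sum>i=1..k. a i) = l"
    using ex_power_int_root A by blast
  then have "word_map a b k (mat2 t 0 0 (inverse t)) (mat2 1 0 0 1) = mat2 l 0 0 (inverse l)"
    by (simp add: word_map_diag_unipotent)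
  then show "mat2 l 0 0 (inverse l) \<in> word_image a b k"
    by (rule word_image_memI) (simp_all add: diag_in_SL2 unipotent_in_SL2 t(1))
next
  fix c :: complex
  have "word_map a b k (mat2 1 (c / of_int (\<Sum>i=1..k. a i)) 0 1) (mat2 1 0 0 (inverse 1)) = mat2 1 c 0 1"
    using A word_map_unipotent_diag[of 1 a b k "c / of_int (\<Sum>i=1..k. a i)"] by (simp flip: of_int_sum)
  then show "mat2 1 c 0 1 \<in> word_image a b k"
    by (rule word_image_memI) (simp_all add: diag_in_SL2 unipotent_in_SL2)
next
  fix c :: complex
  have \<gamma>0: "\<gamma> \<noteq> 0" using \<gamma> A by auto
  then have "word_map a b k (mat2 \<gamma> 0 0 (inverse \<gamma>)) (mat2 1 (- c / (\<Sum>i=1..k. of_int (b i) * \<gamma> powi (2 * (\<Sum>j=1..i. a j)))) 0 1)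
      = mat2 (-1) c 0 (-1)"
    using \<gamma> S by (simp add: word_map_diag_unipotent)
  then show "mat2 (-1) c 0 (-1) \<in> word_image a b k"
    by (rule word_image_memI) (simp_all add: diag_in_SL2 unipotent_in_SL2 \<gamma>0)
qed

lemma word_map_surjective_if_sum_b_nonzero:
  fixes \<delta> :: complex
  assumes B: "(\<Sum>i=1..k. b i) \<noteq> 0"
    and \<delta>: "\<delta> powi (\<Sum>i=1..k. b i) = -1"
    and S: "(\<Sum>i=1..k. of_int (a i) * \<delta> powi (2 * (\<Sum>j=1..<i. b j))) \<noteq> 0"
  shows "word_map_surjective a b k"
proof (rule word_map_surjective_if_triangular_in_image)
  fix l :: complex assume "l \<noteq> 0"
  then obtain t where t: "t \<noteq> 0" "t powi (\<Sum>i=1..k. b i) = l"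
    using ex_power_int_root B by blast
  then have "word_map a b k (mat2 1 0 0 1) (mat2 t 0 0 (inverse t)) = mat2 l 0 0 (inverse l)"
    by (simp add: word_map_unipotent_diag)
  then show "mat2 l 0 0 (inverse l) \<in> word_image a b k"
    by (rule word_image_memI) (simp_all add: diag_in_SL2 unipotent_in_SL2 t(1))
next
  fix c :: complex
  have "word_map a b k (mat2 1 0 0 (inverse 1)) (mat2 1 (c / of_int (\<Sum>i=1..k. b i)) 0 1) = mat2 1 c 0 1"
    using B word_map_diag_unipotent[of 1 a b k "c / of_int (\<Sum>i=1..k. b i)"] by (simp flip: of_int_sum)
  then show "mat2 1 c 0 1 \<in> word_image a b k"
    by (rule word_image_memI) (simp_all add: diag_in_SL2 unipotent_in_SL2)
next
  fix c :: complex
  have \<delta>0: "\<delta> \<noteq> 0" using \<delta> B by auto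
  then have "word_map a b k (mat2 1 (- c / (\<Sum>i=1..k. of_int (a i) * \<delta> powi (2 * (\<Sum>j=1..<i. b j)))) 0 1) (mat2 \<delta> 0 0 (inverse \<delta>))
      = mat2 (-1) c 0 (-1)"
    using \<delta> S by (simp add: word_map_unipotent_diag)
  then show "mat2 (-1) c 0 (-1) \<in> word_image a b k"
    by (rule word_image_memI) (simp_all add: diag_in_SL2 unipotent_in_SL2 \<delta>0)
qed

theorem lemma7p2:
  fixes a b :: "nat \<Rightarrow> int" and k :: nat
  assumes "\<forall>i\<in>{1..k}. a i \<noteq> 0"
    and "\<forall>i\<in>{1..k}. b i \<noteq> 0"
  shows "((\<Sum>i=1..k. a i) \<noteq> 0 \<and> \<not> word_map_surjective a b k \<longrightarrow>
           (\<forall>\<gamma>::complex. \<gamma> powi (\<Sum>i=1..k. a i) + 1 = 0 \<longrightarrow>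
              (\<Sum>i=1..k. of_int (b i) * \<gamma> powi (2 * (\<Sum>j=1..i. a j))) = 0))
       \<and> ((\<Sum>i=1..k. b i) \<noteq> 0 \<and> \<not> word_map_surjective a b k \<longrightarrow>
           (\<forall>\<delta>::complex. \<delta> powi (\<Sum>i=1..k. b i) + 1 = 0 \<longrightarrow>
              (\<Sum>i=1..k. of_int (a i) * \<delta> powi (2 * (\<Sum>j=1..<i. b j))) = 0))"
  \<comment> \<open>the exponents need not be nonzero\<close>
proof (intro conjI impI allI; elim conjE)
  fix \<gamma> :: complex
  assume "(\<Sum>i=1..k. a i) \<noteq> 0" "\<not> word_map_surjective a b k" "\<gamma> powi (\<Sum>i=1..k. a i) + 1 = 0"
  then show "(\<Sum>i=1..k. of_int (b i) * \<gamma> powi (2 * (\<Sum>j=1..i. a j))) = 0"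
    using word_map_surjective_if_sum_a_nonzero[of a k \<gamma> b] by (auto simp: eq_neg_iff_add_eq_0)
next
  fix \<delta> :: complex
  assume "(\<Sum>i=1..k. b i) \<noteq> 0" "\<not> word_map_surjective a b k" "\<delta> powi (\<Sum>i=1..k. b i) + 1 = 0"
  then show "(\<Sum>i=1..k. of_int (a i) * \<delta> powi (2 * (\<Sum>j=1..<i. b j))) = 0"
    using word_map_surjective_if_sum_b_nonzero[of b k \<delta> a] by (auto simp: eq_neg_iff_add_eq_0)
qed

end
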